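(* Let $\{\mathcal{G}_k\}_{k\ge0}$ be any sequence of digraphs on $\mathcal{V}=\{1,\dots,n\}$, $n\ge3$. Consider any algorithm in $\mathcal{A}_{\rm ave}$ whose parameters satisfy $\sum_{k=0}^\infty(1-\eta_k)<\infty$. Then for every initial time $k_0\ge0$ and every initial value $x^0\in\mathbb{R}^n$ not on the consensus manifold $\mathrm{C}=\{x: x_1=\dots=x_n\}$, asymptotic consensus is not achieved; in fact $\liminf_{K\to\infty}\big(\max_i x_i(K)-\min_i x_i(K)\big)>0$.
   Context: Network of nodes $\mathcal{V}=\{1,\dots,n\}$, discrete time, states $x_i(k)\in\mathbb{R}$. At each time $k$ a digraph $\mathcal{G}_k=(\mathcal{V},\mathcal{E}_k)$ is given; $j$ is a neighbor of $i$ at time $k$ if $(j,i)\in\mathcal{E}_k$, every node is always its own neighbor; $\mathcal{N}_i(k)$ is the neighbor set. The algorithm is $$x_i(k+1)=\eta_k x_i(k)+\alpha_k\min_{j\in\mathcal{N}_i(k)}x_j(k)+(1-\eta_k-\alpha_k)\max_{j\in\mathcal{N}_i(k)}x_j(k),$$ with given node-independent parameter sequences. The class $\mathcal{A}_{\rm ave}$ consists of those algorithms with $\eta_k\in(0,1]$, $\alpha_k\in[0,1-\eta_k]$ for all $k$. The iteration starts at time $k_0$ with $x(k_0)=x^0$. Asymptotic consensus for $x^0$ means there is $z_*\in\mathbb{R}$ with $\lim_{k\to\infty}x_i(k)=z_*$ for all $i$. *)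

theory Defs
  imports "HOL-Analysis.Analysis"
begin

definition nbrs :: "(nat \<Rightarrow> ('a \<times> 'a) set) \<Rightarrow> nat \<Rightarrow> 'a \<Rightarrow> 'a set" where
  "nbrs E k i = {j. (j, i) \<in> E k} \<union> {i}"

definition alg_step :: "(nat \<Rightarrow> ('a \<times> 'a) set) \<Rightarrow> (nat \<Rightarrow> real) \<Rightarrow> (nat \<Rightarrow> real)
    \<Rightarrow> nat \<Rightarrow> ('a \<Rightarrow> real) \<Rightarrow> ('a \<Rightarrow> real)" where
  "alg_step E \<eta> \<alpha> k x i =
     \<eta> k * x i + \<alpha> k * Min (x ` nbrs E k i) + (1 - \<eta> k - \<alpha> k) * Max (x ` nbrs E k i)"

text \<open>State after m steps when started at time k0 with value x0, i.e. x(k0 + m).\<close>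
primrec traj :: "(nat \<Rightarrow> ('a \<times> 'a) set) \<Rightarrow> (nat \<Rightarrow> real) \<Rightarrow> (nat \<Rightarrow> real)
    \<Rightarrow> nat \<Rightarrow> ('a \<Rightarrow> real) \<Rightarrow> nat \<Rightarrow> ('a \<Rightarrow> real)" where
  "traj E \<eta> \<alpha> k0 x0 0 = x0"
| "traj E \<eta> \<alpha> k0 x0 (Suc m) = alg_step E \<eta> \<alpha> (k0 + m) (traj E \<eta> \<alpha> k0 x0 m)"

text \<open>x(K) for K \<ge> k0 (the value for K < k0 is irrelevant, set to x0).\<close>
definition state :: "(nat \<Rightarrow> ('a \<times> 'a) set) \<Rightarrow> (nat \<Rightarrow> real) \<Rightarrow> (nat \<Rightarrow> real)
    \<Rightarrow> nat \<Rightarrow> ('a \<Rightarrow> real) \<Rightarrow> nat \<Rightarrow> ('a \<Rightarrow> real)" where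
  "state E \<eta> \<alpha> k0 x0 K = traj E \<eta> \<alpha> k0 x0 (K - k0)"

definition in_A_ave :: "(nat \<Rightarrow> real) \<Rightarrow> (nat \<Rightarrow> real) \<Rightarrow> bool" where
  "in_A_ave \<eta> \<alpha> \<longleftrightarrow> (\<forall>k. 0 < \<eta> k \<and> \<eta> k \<le> 1 \<and> 0 \<le> \<alpha> k \<and> \<alpha> k \<le> 1 - \<eta> k)"

definition asymptotic_consensus :: "(nat \<Rightarrow> ('a \<Rightarrow> real)) \<Rightarrow> bool" where
  "asymptotic_consensus x \<longleftrightarrow> (\<exists>z. \<forall>i. (\<lambda>k. x k i) \<longlonglongrightarrow> z)"

definition spread :: "('a::finite \<Rightarrow> real) \<Rightarrow> real" where
  "spread x = Max (range x) - Min (range x)"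

end

theory Submission
  imports Defs
begin

(*
  At every node the update is a convex combination in which
  the node's own value has weight eta_k.  Take a node t where the state is
  maximal and a node b where it is minimal: t is its own neighbourhood maximum,
  b its own neighbourhood minimum, and therefore the new values at t and b are
  at least eta_k (x t - x b) apart.  Hence one step shrinks the spread
  (max minus min) by at most the factor eta_k, and after K - k0 steps the spread
  is at least  spread x0 * prod eta_k.  Since 0 < eta_k <= 1 and
  sum (1 - eta_k) < infinity, all finite products of the eta_k are bounded below
  by one constant C > 0.  So the spread stays above  spread x0 * C > 0  forever,
  which gives both the positive liminf and, since consensus would force the
  spread to zero, the failure of consensus.

  The theorem is then a short combination; the
  argument works for any number of nodes.
*)

lemma spread_ge: "x i - x j \<le> spread (x :: 'n::finite \<Rightarrow> real)"
proof -
  have "x i \<le> Max (range x)" and "Min (range x) \<le> x j" by simp_all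
  then show ?thesis unfolding spread_def by linarith
qed

lemma spread_attained:
  fixes x :: "'n::finite \<Rightarrow> real"
  obtains t b where "\<And>i. x i \<le> x t" "\<And>i. x b \<le> x i" "spread x = x t - x b"
proof -
  have "Max (range x) \<in> range x" "Min (range x) \<in> range x" by simp_all
  then obtain t b where "x t = Max (range x)" "x b = Min (range x)"
    by (metis imageE)
  then show ?thesis using that[of t b] by (simp add: spread_def)
qed

lemma spread_pos_iff: "0 < spread (x :: 'n::finite \<Rightarrow> real) \<longleftrightarrow> (\<exists>i j. x i \<noteq> x j)"
proof
  assume "0 < spread x"
  obtain t b where "spread x = x t - x b" by (rule spread_attained[of x])
  with \<open>0 < spread x\<close> show "\<exists>i j. x i \<noteq> x j" by (metis diff_self less_irrefl)
next
  assume "\<exists>i j. x i \<noteq> x j"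
  then obtain i j where "x i \<noteq> x j" by blast
  then show "0 < spread x" using spread_ge[of x i j] spread_ge[of x j i] by linarith
qed

lemma Max_nbrs_at_top:
  fixes x :: "'n::finite \<Rightarrow> real"
  assumes "\<And>i. x i \<le> x t"
  shows "Max (x ` nbrs E k t) = x t"
  using assms by (intro Max_eqI) (auto simp: nbrs_def)

lemma Min_nbrs_at_bottom:
  fixes x :: "'n::finite \<Rightarrow> real"
  assumes "\<And>i. x b \<le> x i"
  shows "Min (x ` nbrs E k b) = x b"
  using assms by (intro Min_eqI) (auto simp: nbrs_def)

lemma step_spread:
  fixes x :: "'n::finite \<Rightarrow> real"
  assumes A: "in_A_ave \<eta> \<alpha>"
  shows "\<eta> k * spread x \<le> spread (alg_step E \<eta> \<alpha> k x)"
proof -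
  obtain t b where top: "\<And>i. x i \<le> x t" and bot: "\<And>i. x b \<le> x i"
    and sp: "spread x = x t - x b" using spread_attained[of x] by blast
  let ?mt = "Min (x ` nbrs E k t)" and ?Mb = "Max (x ` nbrs E k b)"
  have "x b \<le> ?mt" using bot by (subst Min_ge_iff) (auto simp: nbrs_def)
  moreover have "?Mb \<le> x t" using top by (subst Max_le_iff) (auto simp: nbrs_def)
  moreover have "0 \<le> \<alpha> k" "0 \<le> 1 - \<eta> k - \<alpha> k" using A by (auto simp: in_A_ave_def)
  ultimately have gain: "0 \<le> \<alpha> k * (?mt - x b) + (1 - \<eta> k - \<alpha> k) * (x t - ?Mb)"
    by simp
  have "alg_step E \<eta> \<alpha> k x t - alg_step E \<eta> \<alpha> k x b
      = \<eta> k * (x t - x b) + (\<alpha> k * (?mt - x b) + (1 - \<eta> k - \<alpha> k) * (x t - ?Mb))"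
    unfolding alg_step_def Max_nbrs_at_top[of x, OF top] Min_nbrs_at_bottom[of x, OF bot]
    by (simp add: algebra_simps)
  then have "\<eta> k * spread x \<le> alg_step E \<eta> \<alpha> k x t - alg_step E \<eta> \<alpha> k x b"
    using gain sp by simp
  then show ?thesis using spread_ge[of "alg_step E \<eta> \<alpha> k x" t b] by linarith
qed

lemma traj_spread:
  fixes x0 :: "'n::finite \<Rightarrow> real"
  assumes A: "in_A_ave \<eta> \<alpha>"
  shows "spread x0 * (\<Prod>k<m. \<eta> (k0 + k)) \<le> spread (traj E \<eta> \<alpha> k0 x0 m)"
proof (induction m)
  case 0
  then show ?case by simp
next
  case (Suc m)
  have "0 \<le> \<eta> (k0 + m)" using A by (auto simp: in_A_ave_def less_imp_le)
  have "spread x0 * (\<Prod>k<Suc m. \<eta> (k0 + k)) = \<eta> (k0 + m) * (spread x0 * (\<Prod>k<m. \<eta> (k0 + k)))"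
    by (simp add: ac_simps)
  also have "\<dots> \<le> \<eta> (k0 + m) * spread (traj E \<eta> \<alpha> k0 x0 m)"
    by (rule mult_left_mono[OF Suc.IH \<open>0 \<le> \<eta> (k0 + m)\<close>])
  also have "\<dots> \<le> spread (traj E \<eta> \<alpha> k0 x0 (Suc m))"
    using step_spread[OF A] by simp
  finally show ?case .
qed

lemma exp_defect_le:
  fixes e :: real
  assumes "1/2 \<le> e" "e \<le> 1"
  shows "exp (- 2 * (1 - e)) \<le> e"
proof -
  have "- (1 - e) - 2 * (1 - e)\<^sup>2 \<le> ln (1 - (1 - e))"
    using assms by (intro ln_one_minus_pos_lower_bound) auto
  moreover have "2 * (1 - e)\<^sup>2 \<le> 1 - e"
    using mult_left_mono[of "2 * (1 - e)" 1 "1 - e"] assms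
    by (simp add: power2_eq_square algebra_simps)
  ultimately have "- 2 * (1 - e) \<le> ln e" by simp
  then show ?thesis using assms by (simp add: ln_ge_iff)
qed

lemma prod_ge_exp_defects:
  fixes a :: "nat \<Rightarrow> real"
  assumes "\<And>j. j \<in> H \<Longrightarrow> 1/2 \<le> a j \<and> a j \<le> 1"
  shows "exp (- 2 * (\<Sum>j\<in>H. 1 - a j)) \<le> (\<Prod>j\<in>H. a j)"
proof (cases "finite H")
  case True
  have "exp (- 2 * (\<Sum>j\<in>H. 1 - a j)) = (\<Prod>j\<in>H. exp (- 2 * (1 - a j)))"
    using True by (simp add: exp_sum[symmetric] sum_distrib_left)
  also have "\<dots> \<le> (\<Prod>j\<in>H. a j)"
    using assms exp_defect_le by (intro prod_mono) auto
  finally show ?thesis .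
qed simp

lemma finite_prods_bounded_below:
  fixes a :: "nat \<Rightarrow> real"
  assumes pos: "\<And>j. 0 < a j" and le1: "\<And>j. a j \<le> 1"
    and summ: "summable (\<lambda>j. 1 - a j)"
  obtains C where "C > 0" "\<And>F. finite F \<Longrightarrow> C \<le> (\<Prod>j\<in>F. a j)"
proof -
  have "(\<lambda>j. 1 - a j) \<longlonglongrightarrow> 0" using summ by (rule summable_LIMSEQ_zero)
  then have "eventually (\<lambda>j. 1 - a j < 1/2) sequentially" by (rule order_tendstoD) simp
  then obtain N where N: "\<And>j. N \<le> j \<Longrightarrow> 1/2 < a j"
    unfolding eventually_sequentially by auto
  define C where "C = (\<Prod>j<N. a j) * exp (- 2 * (\<Sum>j. 1 - a j))"
  have "C \<le> (\<Prod>j\<in>F. a j)" if F: "finite F" for F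
  proof -
    have head: "(\<Prod>j<N. a j) \<le> (\<Prod>j\<in>F \<inter> {..<N}. a j)"
    proof -
      have "(\<Prod>j<N. a j) = (\<Prod>j\<in>F \<inter> {..<N}. a j) * (\<Prod>j\<in>{..<N} - F. a j)"
        using prod.Int_Diff[of "{..<N}" a F] by (simp add: Int_commute)
      moreover have "(\<Prod>j\<in>{..<N} - F. a j) \<le> 1"
        using pos le1 by (simp add: prod_le_1 less_imp_le)
      moreover have "0 \<le> (\<Prod>j\<in>F \<inter> {..<N}. a j)" using pos by (simp add: prod_nonneg less_imp_le)
      ultimately show ?thesis by (simp add: mult_left_le)
    qed
    have "(\<Sum>j\<in>F - {..<N}. 1 - a j) \<le> (\<Sum>j. 1 - a j)"
      using summ F le1 by (intro sum_le_suminf) auto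
    then have "exp (- 2 * (\<Sum>j. 1 - a j)) \<le> exp (- 2 * (\<Sum>j\<in>F - {..<N}. 1 - a j))" by simp
    also have "\<dots> \<le> (\<Prod>j\<in>F - {..<N}. a j)"
      using N le1 by (intro prod_ge_exp_defects) (auto simp: less_imp_le)
    finally have tail: "exp (- 2 * (\<Sum>j. 1 - a j)) \<le> (\<Prod>j\<in>F - {..<N}. a j)" .
    have "C \<le> (\<Prod>j\<in>F \<inter> {..<N}. a j) * (\<Prod>j\<in>F - {..<N}. a j)"
      unfolding C_def using head tail pos by (intro mult_mono) (auto simp: prod_nonneg less_imp_le)
    then show ?thesis using prod.Int_Diff[OF F, of a "{..<N}"] by simp
  qed
  moreover have "C > 0" unfolding C_def using pos by (simp add: prod_pos)
  ultimately show ?thesis using that by blast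
qed

lemma consensus_spread_small:
  fixes x :: "nat \<Rightarrow> 'n::finite \<Rightarrow> real"
  assumes "asymptotic_consensus x" "0 < \<epsilon>"
  shows "\<exists>k. spread (x k) < \<epsilon>"
proof -
  obtain z where z: "\<And>i. (\<lambda>k. x k i) \<longlonglongrightarrow> z"
    using assms(1) unfolding asymptotic_consensus_def by blast
  have "eventually (\<lambda>k. \<forall>i. dist (x k i) z < \<epsilon>/2) sequentially"
    using assms(2) by (intro eventually_all_finite tendstoD[OF z]) simp
  then obtain k where k: "\<And>i. dist (x k i) z < \<epsilon>/2"
    unfolding eventually_sequentially by blast
  obtain t b where "spread (x k) = x k t - x k b" by (rule spread_attained[of "x k"])
  moreover have "x k t - x k b < \<epsilon>"
    using k[of t] k[of b] unfolding dist_real_def abs_less_iff by linarith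
  ultimately have "spread (x k) < \<epsilon>" by linarith
  then show ?thesis ..
qed

theorem theorem2:
  fixes E :: "nat \<Rightarrow> ('n::finite \<times> 'n) set"
    and \<eta> \<alpha> :: "nat \<Rightarrow> real"
    and k0 :: nat
    and x0 :: "'n \<Rightarrow> real"
  assumes "CARD('n) \<ge> 3"
    and "in_A_ave \<eta> \<alpha>"
    and "summable (\<lambda>k. 1 - \<eta> k)"
    and "\<exists>i j. x0 i \<noteq> x0 j"
  shows "\<not> asymptotic_consensus (state E \<eta> \<alpha> k0 x0)
         \<and> liminf (\<lambda>K. ereal (spread (state E \<eta> \<alpha> k0 x0 K))) > 0"
proof -
  let ?x = "state E \<eta> \<alpha> k0 x0"
  obtain C where C: "C > 0" "\<And>F. finite F \<Longrightarrow> C \<le> (\<Prod>j\<in>F. \<eta> j)"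
    using finite_prods_bounded_below[of \<eta>] assms(2,3) by (auto simp: in_A_ave_def)
  define \<delta> where "\<delta> = spread x0 * C"
  have x0_spread: "0 < spread x0" using assms(4) spread_pos_iff by blast
  then have \<delta>_pos: "0 < \<delta>" unfolding \<delta>_def using C(1) by simp
  have bound: "\<delta> \<le> spread (?x K)" for K
  proof -
    have "C \<le> (\<Prod>k<K - k0. \<eta> (k0 + k))"
      using C(2)[of "(+) k0 ` {..<K - k0}"] by (simp add: prod.reindex)
    then have "\<delta> \<le> spread x0 * (\<Prod>k<K - k0. \<eta> (k0 + k))"
      unfolding \<delta>_def using x0_spread by simp
    also have "\<dots> \<le> spread (?x K)" unfolding state_def by (rule traj_spread[OF assms(2)])
    finally show ?thesis .
  qed
  have "ereal \<delta> \<le> liminf (\<lambda>K. ereal (spread (?x K)))"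
    using bound by (intro Liminf_bounded) auto
  then have "liminf (\<lambda>K. ereal (spread (?x K))) > 0"
    using \<delta>_pos less_le_trans[of 0 "ereal \<delta>"] by simp
  moreover have "\<not> asymptotic_consensus ?x"
    using consensus_spread_small[of ?x \<delta>] bound \<delta>_pos by (meson not_le)
  ultimately show ?thesis by blast
qed

end
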